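(* Let $V,W$ be finite-dimensional Hermitian vector spaces, $\tilde W=V\oplus V\oplus W$, and let $B_1,B_2\in\mathrm{End}(V)$, $i\in\mathrm{Hom}(W,V)$, $j\in\mathrm{Hom}(V,W)$ satisfy $[B_1,B_2]+ij=0$ and $[B_1,B_1^\dagger]+[B_2,B_2^\dagger]+ii^\dagger-j^\dagger j=0$. Let $\alpha_{\rm I}:V\otimes\mathfrak{M}^{\rm I}_q\to\tilde W\otimes\mathfrak{M}^{\rm I}_q$ and $\beta_{\rm I}:\tilde W\otimes\mathfrak{M}^{\rm I}_q\to V\otimes\mathfrak{M}^{\rm I}_q$ be the right-linear maps $$\alpha_{\rm I}=\begin{pmatrix}B_1\otimes 1-1\otimes x_{21'}\\ B_2\otimes1-1\otimes x_{22'}\\ j\otimes 1\end{pmatrix},\qquad \beta_{\rm I}=\begin{pmatrix}-B_2\otimes1+1\otimes x_{22'} & B_1\otimes1-1\otimes x_{21'} & i\otimes1\end{pmatrix}.$$ Then (1) $\alpha_{\rm I}$ is injective; (2) $\beta_{\rm I}$ is surjective if and only if $(B_1,B_2,i,j)$ is stable.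
   Context: $\mathfrak{M}^{\rm I}_q$ is the algebra generated by $x_{11'},x_{12'},x_{21'},x_{22'}$ subject to $x_{11'}x_{12'}=x_{12'}x_{11'}$, $x_{21'}x_{22'}=x_{22'}x_{21'}$, $[x_{11'},x_{22'}]+[x_{21'},x_{12'}]=0$, $x_{11'}x_{21'}=q^{-2}x_{21'}x_{11'}$, $x_{12'}x_{22'}=q^{-2}x_{22'}x_{12'}$, $x_{21'}x_{12'}=q^2x_{12'}x_{21'}$, with $q>0$ real. For a linear map $A$ and $x\in\mathfrak{M}^{\rm I}_q$, $A\otimes x$ is the right-linear map $v\otimes f\mapsto Av\otimes xf$. $(B_1,B_2,i,j)$ is stable if no proper subspace $S\subsetneq V$ satisfies $B_k(S)\subset S$ ($k=1,2$) and $i(W)\subset S$. *)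

theory Defs
  imports "HOL-Analysis.Analysis" "HOL-Library.Poly_Mapping"
begin

datatype gen = X11 | X12 | X21 | X22

datatype fword = Word "gen list"

instantiation fword :: monoid_add
begin
definition zero_fword :: fword where "zero_fword = Word []"
fun plus_fword :: "fword \<Rightarrow> fword \<Rightarrow> fword" where
  "plus_fword (Word a) (Word b) = Word (a @ b)"
instance
proof
  fix a b c :: fword
  show "a + b + c = a + (b + c)" by (cases a; cases b; cases c) simp_all
  show "0 + a = a" by (cases a) (simp add: zero_fword_def)
  show "a + 0 = a" by (cases a) (simp add: zero_fword_def)
qed
end

text \<open>The free associative complex algebra: finitely supported complex functions on words,
  with convolution product (a ring_1 via the Poly_Mapping instances).\<close>
type_synonym falg = "fword \<Rightarrow>\<^sub>0 complex"

definition gen_el :: "gen \<Rightarrow> falg" where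
  "gen_el g = Poly_Mapping.single (Word [g]) 1"

definition scal :: "complex \<Rightarrow> falg" where
  "scal c = Poly_Mapping.single 0 c"

text \<open>Defining relations of M^I_q, each written as r - s for the relation r = s.\<close>
definition rels_I :: "real \<Rightarrow> falg set" where
  "rels_I q = (let x11 = gen_el X11; x12 = gen_el X12; x21 = gen_el X21; x22 = gen_el X22 in
     { x11 * x12 - x12 * x11,
       x21 * x22 - x22 * x21,
       (x11 * x22 - x22 * x11) + (x21 * x12 - x12 * x21),
       x11 * x21 - scal (complex_of_real (q powi (-2))) * (x21 * x11),
       x12 * x22 - scal (complex_of_real (q powi (-2))) * (x22 * x12),
       x21 * x12 - scal (complex_of_real (q\<^sup>2)) * (x12 * x21) })"

text \<open>The two-sided ideal generated by the relations; M^I_q is falg modulo this ideal.\<close>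
inductive_set ideal_I :: "real \<Rightarrow> falg set" for q :: real where
  gen: "r \<in> rels_I q \<Longrightarrow> r \<in> ideal_I q"
| zero: "0 \<in> ideal_I q"
| add: "a \<in> ideal_I q \<Longrightarrow> b \<in> ideal_I q \<Longrightarrow> a + b \<in> ideal_I q"
| lmult: "a \<in> ideal_I q \<Longrightarrow> c * a \<in> ideal_I q"
| rmult: "a \<in> ideal_I q \<Longrightarrow> a * c \<in> ideal_I q"

definition adj :: "complex^'n^'m \<Rightarrow> complex^'m^'n" where
  "adj A = (\<chi> k l. cnj (A $ l $ k))"

definition stable ::
  "complex^'n^'n \<Rightarrow> complex^'n^'n \<Rightarrow> complex^'m^'n \<Rightarrow> complex^'n^'m \<Rightarrow> bool" where
  "stable B1 B2 i j \<longleftrightarrow>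
     \<not> (\<exists>S. vec.subspace S \<and> S \<noteq> UNIV \<and> (\<lambda>v. B1 *v v) ` S \<subseteq> S \<and> (\<lambda>v. B2 *v v) ` S \<subseteq> S
            \<and> range (\<lambda>w. i *v w) \<subseteq> S)"

text \<open>An element of V \<otimes> falg (V = C^'n with standard basis e_k) is given by its
  coefficients 'n \<Rightarrow> falg, i.e. \<Sum>_k e_k \<otimes> g k.\<close>
definition tens :: "complex^'a^'b \<Rightarrow> falg \<Rightarrow> ('a \<Rightarrow> falg) \<Rightarrow> ('b \<Rightarrow> falg)" where
  "tens A x g = (\<lambda>k. \<Sum>l\<in>UNIV. scal (A $ k $ l) * (x * g l))"

definition alpha_I ::
  "complex^'n^'n \<Rightarrow> complex^'n^'n \<Rightarrow> complex^'n^'m \<Rightarrow> ('n \<Rightarrow> falg)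
     \<Rightarrow> ('n \<Rightarrow> falg) \<times> ('n \<Rightarrow> falg) \<times> ('m \<Rightarrow> falg)" where
  "alpha_I B1 B2 j g =
     ((\<lambda>k. tens B1 1 g k - gen_el X21 * g k),
      (\<lambda>k. tens B2 1 g k - gen_el X22 * g k),
      tens j 1 g)"

definition beta_I ::
  "complex^'n^'n \<Rightarrow> complex^'n^'n \<Rightarrow> complex^'m^'n
     \<Rightarrow> ('n \<Rightarrow> falg) \<times> ('n \<Rightarrow> falg) \<times> ('m \<Rightarrow> falg) \<Rightarrow> ('n \<Rightarrow> falg)" where
  "beta_I B1 B2 i f = (case f of (a, b, c) \<Rightarrow>
     (\<lambda>k. - tens B2 1 a k + gen_el X22 * a k + tens B1 1 b k - gen_el X21 * b k + tens i 1 c k))"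

text \<open>Injectivity / surjectivity of the induced maps on V \<otimes> M^I_q = (falg / ideal_I q)^n,
  expressed through the congruence modulo ideal_I q (coordinatewise).\<close>
definition zero_mod :: "real \<Rightarrow> ('a \<Rightarrow> falg) \<Rightarrow> bool" where
  "zero_mod q g \<longleftrightarrow> (\<forall>k. g k \<in> ideal_I q)"

definition alpha_I_injective ::
  "real \<Rightarrow> complex^'n^'n \<Rightarrow> complex^'n^'n \<Rightarrow> complex^'n^'m \<Rightarrow> bool" where
  "alpha_I_injective q B1 B2 j \<longleftrightarrow>
     (\<forall>g g'. (case (alpha_I B1 B2 j g, alpha_I B1 B2 j g') of ((a,b,c),(a',b',c')) \<Rightarrow>
                zero_mod q (\<lambda>k. a k - a' k) \<and> zero_mod q (\<lambda>k. b k - b' k) \<and> zero_mod q (\<lambda>k. c k - c' k))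
            \<longrightarrow> zero_mod q (\<lambda>k. g k - g' k))"

definition beta_I_surjective ::
  "real \<Rightarrow> complex^'n^'n \<Rightarrow> complex^'n^'n \<Rightarrow> complex^'m^'n \<Rightarrow> bool" where
  "beta_I_surjective q B1 B2 i \<longleftrightarrow>
     (\<forall>h :: 'n \<Rightarrow> falg. \<exists>f. zero_mod q (\<lambda>k. beta_I B1 B2 i f k - h k))"

end

(*
  Injectivity of alpha_I: the ordered monomials x21^a x12^b x11^c x22^d span M^I_q, since the
  relations let every generator be moved into place, and they are linearly independent, since left
  multiplication written in their coordinates (the Fock representation below) satisfies the relations.
  If (B1 \<otimes> 1 - 1 \<otimes> x21) g = 0, the coordinates of g therefore satisfy
  u_k(a, r) = \<Sum>_l (B1)_kl u_l(a + 1, r); they are finitely supported, so descending in a gives g = 0.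

  Surjectivity of beta_I versus stability: if S is a proper subspace containing im i and invariant
  under B1 and B2, let x21 and x22 act on V by B1 and B2, and x11, x12 by zero. Since [B1, B2] = - i j,
  this respects the relations modulo S, so the contraction v \<otimes> f \<mapsto> f.v maps the image of beta_I
  and everything congruent to zero into S; hence beta_I misses v \<otimes> 1 for v \<notin> S. Conversely, the v
  with v \<otimes> y in the image of beta_I for all y form a subspace containing im i and invariant under
  B1 and B2, because B1 v \<otimes> y = beta_I (0, v \<otimes> y, 0) + v \<otimes> x21 y (and similarly for B2);
  by stability it is all of V.
*)

theory Submission
  imports Defs
begin

section \<open>Linear actions of the free algebra\<close>

type_synonym 'x cfun = "'x \<Rightarrow> complex"

definition linear_op :: "('x cfun \<Rightarrow> 'y cfun) \<Rightarrow> bool" where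
  "linear_op T \<longleftrightarrow>
     (\<forall>u v. T (\<lambda>m. u m + v m) = (\<lambda>m. T u m + T v m)) \<and> (\<forall>c u. T (\<lambda>m. c * u m) = (\<lambda>m. c * T u m))"

lemma linear_op_add: "linear_op T \<Longrightarrow> T (\<lambda>m. u m + v m) = (\<lambda>m. T u m + T v m)"
  by (simp add: linear_op_def)

lemma linear_op_scale: "linear_op T \<Longrightarrow> T (\<lambda>m. c * u m) = (\<lambda>m. c * T u m)"
  by (simp add: linear_op_def)

lemma linear_op_zero:
  assumes "linear_op T" shows "T (\<lambda>m. 0) = (\<lambda>m. 0)"
  using linear_op_scale[OF assms, of 0] by simp

lemma linear_op_diff:
  assumes "linear_op T" shows "T (\<lambda>m. u m - v m) = (\<lambda>m. T u m - T v m)"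
proof -
  have "T (\<lambda>m. u m - v m) = T (\<lambda>m. u m + (-1) * v m)"
    by simp
  also have "\<dots> = (\<lambda>m. T u m + (-1) * T v m)"
    by (simp only: linear_op_add[OF assms] linear_op_scale[OF assms])
  finally show ?thesis
    by simp
qed

lemma linear_op_sum:
  assumes "linear_op T" shows "T (\<lambda>m. \<Sum>s\<in>F. U s m) = (\<lambda>m. \<Sum>s\<in>F. T (U s) m)"
  by (induction F rule: infinite_finite_induct) (simp_all add: linear_op_zero[OF assms] linear_op_add[OF assms])

lemma linear_op_comp: "linear_op S \<Longrightarrow> linear_op T \<Longrightarrow> linear_op (S \<circ> T)"
  by (simp add: linear_op_def)

lemma linear_op_id: "linear_op id"
  by (simp add: linear_op_def)

type_synonym 'x gen_action = "gen \<Rightarrow> 'x cfun \<Rightarrow> 'x cfun"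

fun word_letters :: "fword \<Rightarrow> gen list" where
  "word_letters (Word l) = l"

lemma word_letters_plus: "word_letters (v + w) = word_letters v @ word_letters w"
  by (cases v; cases w) simp

lemma word_letters_zero: "word_letters 0 = []"
  by (simp add: zero_fword_def)

fun word_action :: "'x gen_action \<Rightarrow> gen list \<Rightarrow> 'x cfun \<Rightarrow> 'x cfun" where
  "word_action G [] = id"
| "word_action G (x # xs) = G x \<circ> word_action G xs"

lemma word_action_append: "word_action G (xs @ ys) = word_action G xs \<circ> word_action G ys"
  by (induction xs) auto

lemma word_action_replicate: "word_action G (replicate n x) = G x ^^ n"
  by (induction n) auto

lemma linear_op_word_action: "(\<And>x. linear_op (G x)) \<Longrightarrow> linear_op (word_action G xs)"
  by (induction xs) (auto intro: linear_op_comp linear_op_id)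

definition falg_action :: "'x gen_action \<Rightarrow> falg \<Rightarrow> 'x cfun \<Rightarrow> 'x cfun" where
  "falg_action G f u =
     (\<lambda>m. \<Sum>w\<in>Poly_Mapping.keys f. Poly_Mapping.lookup f w * word_action G (word_letters w) u m)"

lemma falg_action_superset:
  assumes "finite W" "Poly_Mapping.keys f \<subseteq> W"
  shows "falg_action G f u m = (\<Sum>w\<in>W. Poly_Mapping.lookup f w * word_action G (word_letters w) u m)"
  unfolding falg_action_def
  by (rule sum.mono_neutral_left) (use assms in \<open>auto simp: in_keys_iff\<close>)

lemma falg_action_add: "falg_action G (f + g) u m = falg_action G f u m + falg_action G g u m"
proof -
  let ?W = "Poly_Mapping.keys f \<union> Poly_Mapping.keys g"
  have "finite ?W" "Poly_Mapping.keys (f + g) \<subseteq> ?W"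
    using keys_add[of f g] by auto
  then show ?thesis
    by (simp add: falg_action_superset[of ?W] lookup_add distrib_right sum.distrib)
qed

lemma falg_action_zero: "falg_action G 0 u m = 0"
  by (simp add: falg_action_def)

lemma falg_action_diff: "falg_action G (f - g) u m = falg_action G f u m - falg_action G g u m"
  using falg_action_add[of G "f - g" g u m] by simp

lemma falg_action_single:
  "falg_action G (Poly_Mapping.single w c) u m = c * word_action G (word_letters w) u m"
  by (simp add: falg_action_def)

lemma falg_action_sum: "falg_action G (\<Sum>s\<in>F. f s) u m = (\<Sum>s\<in>F. falg_action G (f s) u m)"
  by (induction F rule: infinite_finite_induct) (simp_all add: falg_action_zero falg_action_add)

lemma linear_op_falg_action:
  assumes "\<And>x. linear_op (G x)" shows "linear_op (falg_action G f)"
proof -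
  have L: "linear_op (word_action G xs)" for xs
    using linear_op_word_action assms by blast
  show ?thesis
    unfolding linear_op_def falg_action_def
    by (simp add: linear_op_add[OF L] linear_op_scale[OF L] sum_distrib_left distrib_left
        sum.distrib mult.left_commute)
qed

lemma update_eq_add_single:
  "w \<notin> Poly_Mapping.keys f \<Longrightarrow> Poly_Mapping.update w c f = f + Poly_Mapping.single w c"
  by (intro poly_mapping_eqI) (auto simp: lookup_update lookup_add lookup_single in_keys_iff when_def)

lemma poly_mapping_add_single_induct:
  assumes "P 0" "\<And>f w c. P f \<Longrightarrow> P (f + Poly_Mapping.single w c)"
  shows "P f"
  by (induction f rule: update_induct) (simp_all add: assms update_eq_add_single)

lemma falg_action_mult:
  assumes "\<And>x. linear_op (G x)"
  shows "falg_action G (f * g) u = falg_action G f (falg_action G g u)"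
proof (induction f rule: poly_mapping_add_single_induct)
  case (2 f w c)
  let ?W = "word_action G (word_letters w)"
  have L: "linear_op ?W"
    using linear_op_word_action assms by blast
  have "falg_action G (Poly_Mapping.single w c * g) u m = c * ?W (falg_action G g u) m" for m
  proof (induction g rule: poly_mapping_add_single_induct)
    case (2 g v d)
    have "Poly_Mapping.single w c * (g + Poly_Mapping.single v d)
        = Poly_Mapping.single w c * g + Poly_Mapping.single (w + v) (c * d)"
      by (simp add: distrib_left mult_single)
    moreover have "falg_action G (g + Poly_Mapping.single v d) u
        = (\<lambda>m. falg_action G g u m + d * word_action G (word_letters v) u m)"
      by (simp add: fun_eq_iff falg_action_add falg_action_single)
    ultimately show ?case
      using 2 by (simp add: falg_action_add falg_action_single word_letters_plus word_action_append
          linear_op_add[OF L] linear_op_scale[OF L] distrib_left)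
  qed (simp add: falg_action_zero linear_op_zero[OF L])
  then show ?case
    using 2 by (simp add: fun_eq_iff distrib_right falg_action_add falg_action_single)
qed (simp add: fun_eq_iff falg_action_zero)

lemma falg_action_gen: "falg_action G (gen_el x) u = G x u"
  by (simp add: gen_el_def falg_action_single fun_eq_iff)

lemma falg_action_scal: "falg_action G (scal c) u m = c * u m"
  by (simp add: scal_def falg_action_single word_letters_zero)

lemma scal_mult: "scal (a * b) = scal a * scal b"
  by (simp add: scal_def mult_single)

lemma scal_add: "scal (a + b) = scal a + scal b"
  by (simp add: scal_def single_add)

lemma scal_diff: "scal (a - b) = scal a - scal b"
  by (simp add: scal_def single_diff)

lemma scal_one: "scal 1 = 1"
  by (simp add: scal_def)

lemma scal_zero: "scal 0 = 0"
  by (simp add: scal_def)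

lemma scal_sum: "scal (\<Sum>s\<in>F. c s) = (\<Sum>s\<in>F. scal (c s))"
  by (induction F rule: infinite_finite_induct) (simp_all add: scal_zero scal_add)

lemma scal_commute: "scal c * f = f * scal c"
proof (induction f rule: poly_mapping_add_single_induct)
  case (2 f w d)
  have "scal c * Poly_Mapping.single w d = Poly_Mapping.single w d * scal c"
    by (simp add: scal_def mult_single mult.commute)
  with 2 show ?case
    by (simp add: distrib_left distrib_right)
qed simp

lemma mult_scal_left_commute: "f * (scal c * g) = scal c * (f * g)"
  by (metis mult.assoc scal_commute)

lemma scal_scal: "scal a * (scal b * f) = scal (a * b) * f"
  by (simp add: scal_mult mult.assoc)

lemma ideal_I_uminus: "a \<in> ideal_I q \<Longrightarrow> - a \<in> ideal_I q"
  using ideal_I.lmult[of a q "-1"] by simp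

lemma ideal_I_diff: "a \<in> ideal_I q \<Longrightarrow> b \<in> ideal_I q \<Longrightarrow> a - b \<in> ideal_I q"
  using ideal_I.add[of a q "- b"] ideal_I_uminus[of b q] by simp

definition cong_I :: "real \<Rightarrow> falg \<Rightarrow> falg \<Rightarrow> bool" where
  "cong_I q a b \<longleftrightarrow> a - b \<in> ideal_I q"

lemma cong_I_refl: "cong_I q a a"
  by (simp add: cong_I_def ideal_I.zero)

lemma cong_I_trans: "cong_I q a b \<Longrightarrow> cong_I q b c \<Longrightarrow> cong_I q a c"
  unfolding cong_I_def using ideal_I.add by fastforce

lemma cong_I_add: "cong_I q a b \<Longrightarrow> cong_I q c d \<Longrightarrow> cong_I q (a + c) (b + d)"
  unfolding cong_I_def using ideal_I.add by (fastforce simp: algebra_simps)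

lemma cong_I_mult_left: "cong_I q a b \<Longrightarrow> cong_I q (c * a) (c * b)"
  unfolding cong_I_def using ideal_I.lmult by (fastforce simp: algebra_simps)

lemma cong_I_mult_right: "cong_I q a b \<Longrightarrow> cong_I q (a * c) (b * c)"
  unfolding cong_I_def using ideal_I.rmult by (fastforce simp: algebra_simps)

lemma cong_I_commute_power:
  assumes "cong_I q (x * y) (scal k * (y * x))"
  shows "cong_I q (x * y ^ n) (scal (k ^ n) * (y ^ n * x))"
proof (induction n)
  case 0
  show ?case by (simp add: scal_one cong_I_refl)
next
  case (Suc n)
  have "cong_I q (x * y ^ Suc n) (scal k * y * (x * y ^ n))"
    using cong_I_mult_right[OF assms, of "y ^ n"] by (simp add: mult.assoc)
  moreover have "cong_I q (scal k * y * (x * y ^ n)) (scal k * y * (scal (k ^ n) * (y ^ n * x)))"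
    by (rule cong_I_mult_left[OF Suc])
  moreover have "scal k * y * (scal (k ^ n) * (y ^ n * x)) = scal (k ^ Suc n) * (y ^ Suc n * x)"
    by (simp add: mult_scal_left_commute[of y] scal_scal mult.assoc)
  ultimately show ?case
    using cong_I_trans by metis
qed

lemma cong_I_commute_power':
  assumes "cong_I q (x * y) (y * x)"
  shows "cong_I q (x * y ^ n) (y ^ n * x)"
  using cong_I_commute_power[of q x y 1 n] assms by (simp add: scal_one)

abbreviation "x11 \<equiv> gen_el X11"
abbreviation "x12 \<equiv> gen_el X12"
abbreviation "x21 \<equiv> gen_el X21"
abbreviation "x22 \<equiv> gen_el X22"

definition qsq :: "real \<Rightarrow> complex" where
  "qsq q = complex_of_real (q\<^sup>2)"

lemma rels_I_eq:
  "rels_I q = {x11 * x12 - x12 * x11, x21 * x22 - x22 * x21,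
     (x11 * x22 - x22 * x11) + (x21 * x12 - x12 * x21),
     x11 * x21 - scal (inverse (qsq q)) * (x21 * x11),
     x12 * x22 - scal (inverse (qsq q)) * (x22 * x12),
     x21 * x12 - scal (qsq q) * (x12 * x21)}"
proof -
  have "complex_of_real (q powi (-2)) = inverse (qsq q)"
    by (simp add: qsq_def power_int_minus)
  then show ?thesis
    by (simp add: rels_I_def Let_def qsq_def)
qed

lemma cong_I_of_rel: "a - b \<in> rels_I q \<Longrightarrow> cong_I q a b"
  by (simp add: cong_I_def ideal_I.gen)

lemma cong_I_x11_x12: "cong_I q (x11 * x12) (x12 * x11)"
  by (simp add: cong_I_of_rel rels_I_eq)

lemma cong_I_x22_x21: "cong_I q (x22 * x21) (x21 * x22)"
  using ideal_I_uminus[OF ideal_I.gen[of "x21 * x22 - x22 * x21" q]]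
  by (simp add: cong_I_def rels_I_eq)

lemma cong_I_x11_x21: "cong_I q (x11 * x21) (scal (inverse (qsq q)) * (x21 * x11))"
  by (simp add: cong_I_of_rel rels_I_eq)

lemma cong_I_x12_x21:
  assumes "q \<noteq> 0"
  shows "cong_I q (x12 * x21) (scal (inverse (qsq q)) * (x21 * x12))"
proof -
  have "x12 * x21 - scal (inverse (qsq q)) * (x21 * x12)
      = - (scal (inverse (qsq q)) * (x21 * x12 - scal (qsq q) * (x12 * x21)))"
    using assms by (simp add: right_diff_distrib scal_scal qsq_def scal_one)
  then show ?thesis
    unfolding cong_I_def
    using ideal_I_uminus[OF ideal_I.lmult[OF ideal_I.gen]] by (simp add: rels_I_eq)
qed

lemma cong_I_x22_x12:
  assumes "q \<noteq> 0"
  shows "cong_I q (x22 * x12) (scal (qsq q) * (x12 * x22))"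
proof -
  have "x22 * x12 - scal (qsq q) * (x12 * x22)
      = - (scal (qsq q) * (x12 * x22 - scal (inverse (qsq q)) * (x22 * x12)))"
    using assms by (simp add: right_diff_distrib scal_scal qsq_def scal_one)
  then show ?thesis
    unfolding cong_I_def
    using ideal_I_uminus[OF ideal_I.lmult[OF ideal_I.gen]] by (simp add: rels_I_eq)
qed

lemma cong_I_x22_x11:
  assumes "q \<noteq> 0"
  shows "cong_I q (x22 * x11) (x11 * x22 + scal (1 - inverse (qsq q)) * (x21 * x12))"
proof -
  have eq: "x22 * x11 - (x11 * x22 + scal (1 - inverse (qsq q)) * (x21 * x12))
      = - ((x11 * x22 - x22 * x11) + (x21 * x12 - x12 * x21))
        - (x12 * x21 - scal (inverse (qsq q)) * (x21 * x12))"
    by (simp add: scal_diff scal_one left_diff_distrib algebra_simps)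
  have rel: "(x11 * x22 - x22 * x11) + (x21 * x12 - x12 * x21) \<in> ideal_I q"
    by (simp add: ideal_I.gen rels_I_eq)
  show ?thesis
    unfolding cong_I_def eq
    by (rule ideal_I_diff[OF ideal_I_uminus[OF rel] cong_I_x12_x21[OF assms, unfolded cong_I_def]])
qed

section \<open>Ordered monomials span\<close>

type_synonym pbw_index = "nat \<times> nat \<times> nat \<times> nat"

fun pbw_word :: "pbw_index \<Rightarrow> fword" where
  "pbw_word (a, b, c, d) = Word (replicate a X21 @ replicate b X12 @ replicate c X11 @ replicate d X22)"

definition pbw_monomial :: "pbw_index \<Rightarrow> falg" where
  "pbw_monomial m = Poly_Mapping.single (pbw_word m) 1"

lemma gen_el_power: "gen_el x ^ n = Poly_Mapping.single (Word (replicate n x)) 1"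
  by (induction n) (simp_all add: gen_el_def mult_single flip: zero_fword_def)

lemma pbw_monomial_eq: "pbw_monomial (a, b, c, d) = x21 ^ a * x12 ^ b * x11 ^ c * x22 ^ d"
  by (simp add: pbw_monomial_def gen_el_power mult_single)

lemma inj_pbw_word: "inj pbw_word"
proof (rule injI)
  fix m m' :: pbw_index
  assume eq: "pbw_word m = pbw_word m'"
  obtain a b c d a' b' c' d' where m: "m = (a, b, c, d)" "m' = (a', b', c', d')"
    by (cases m, cases m') auto
  have "length (filter ((=) x) (word_letters (pbw_word m)))
      = length (filter ((=) x) (word_letters (pbw_word m')))" for x
    by (simp only: eq)
  from this[of X21] this[of X12] this[of X11] this[of X22] show "m = m'"
    by (simp add: m filter_replicate)
qed

lemma single_pbw_word: "Poly_Mapping.single (pbw_word m) c = scal c * pbw_monomial m"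
  by (simp add: scal_def pbw_monomial_def mult_single)

lemma lookup_scal_mult: "Poly_Mapping.lookup (scal c * g) w = c * Poly_Mapping.lookup g w"
  unfolding scal_def mult_map_scale_conv_mult[symmetric] by transfer (simp add: when_def)

definition pbw_supported :: "falg \<Rightarrow> bool" where
  "pbw_supported g \<longleftrightarrow> Poly_Mapping.keys g \<subseteq> range pbw_word"

lemma pbw_supported_induct [consumes 1, case_names zero add]:
  assumes "pbw_supported g" "P 0"
    and "\<And>f m c. pbw_supported f \<Longrightarrow> P f \<Longrightarrow> P (f + scal c * pbw_monomial m)"
  shows "P g"
  using assms(1)
proof (induction g rule: update_induct)
  case (update f w c)
  then obtain m where "w = pbw_word m" "pbw_supported f"
    by (auto simp: pbw_supported_def keys_update)
  then show ?case
    using update assms(3) by (simp add: update_eq_add_single single_pbw_word)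
qed (use assms(2) in simp)

lemma pbw_supported_add: "pbw_supported f \<Longrightarrow> pbw_supported g \<Longrightarrow> pbw_supported (f + g)"
  using keys_add[of f g] by (auto simp: pbw_supported_def)

lemma pbw_supported_scal_mult: "pbw_supported f \<Longrightarrow> pbw_supported (scal c * f)"
  by (auto simp: pbw_supported_def in_keys_iff lookup_scal_mult)

lemma pbw_supported_pbw_monomial: "pbw_supported (pbw_monomial m)"
  by (simp add: pbw_supported_def pbw_monomial_def)

definition pbw_reducible :: "real \<Rightarrow> falg \<Rightarrow> bool" where
  "pbw_reducible q f \<longleftrightarrow> (\<exists>g. pbw_supported g \<and> cong_I q f g)"

lemma pbw_reducible_cong: "cong_I q f f' \<Longrightarrow> pbw_reducible q f' \<Longrightarrow> pbw_reducible q f"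
  by (auto simp: pbw_reducible_def intro: cong_I_trans)

lemma pbw_reducible_add: "pbw_reducible q f \<Longrightarrow> pbw_reducible q g \<Longrightarrow> pbw_reducible q (f + g)"
  by (auto simp: pbw_reducible_def intro!: pbw_supported_add cong_I_add)

lemma pbw_reducible_scal_mult: "pbw_reducible q f \<Longrightarrow> pbw_reducible q (scal c * f)"
  by (auto simp: pbw_reducible_def intro!: pbw_supported_scal_mult cong_I_mult_left)

lemma pbw_reducible_pbw_monomial: "pbw_reducible q (pbw_monomial m)"
  unfolding pbw_reducible_def using pbw_supported_pbw_monomial cong_I_refl by blast

lemma pbw_reducible_zero: "pbw_reducible q 0"
  unfolding pbw_reducible_def pbw_supported_def by (intro exI[of _ 0]) (simp add: cong_I_refl)

lemma pbw_reducible_mult_left: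
  assumes h: "\<And>m. pbw_reducible q (h * pbw_monomial m)" and f: "pbw_reducible q f"
  shows "pbw_reducible q (h * f)"
proof -
  obtain g where g: "pbw_supported g" "cong_I q f g"
    using f by (auto simp: pbw_reducible_def)
  from g(1) have "pbw_reducible q (h * g)"
  proof (induction rule: pbw_supported_induct)
    case zero
    show ?case
      by (simp add: pbw_reducible_zero)
  next
    case (add f m c)
    then show ?case
      using h by (simp add: distrib_left mult_scal_left_commute pbw_reducible_add pbw_reducible_scal_mult)
  qed
  then show ?thesis
    using cong_I_mult_left[OF g(2)] pbw_reducible_cong by blast
qed

lemma pbw_reducible_mult_left_power:
  assumes "\<And>m. pbw_reducible q (h * pbw_monomial m)" and "pbw_reducible q f"
  shows "pbw_reducible q (h ^ n * f)"
  by (induction n) (simp_all add: assms(2) mult.assoc pbw_reducible_mult_left[OF assms(1)])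

lemma pbw_reducible_x21_mult: "pbw_reducible q (x21 * pbw_monomial m)"
proof -
  obtain a b c d where "m = (a, b, c, d)"
    by (cases m) auto
  then have "x21 * pbw_monomial m = pbw_monomial (Suc a, b, c, d)"
    by (simp add: pbw_monomial_eq mult.assoc)
  then show ?thesis
    by (simp add: pbw_reducible_pbw_monomial)
qed

lemma pbw_reducible_x12_mult:
  assumes "q \<noteq> 0"
  shows "pbw_reducible q (x12 * pbw_monomial m)"
proof -
  obtain a b c d where m: "m = (a, b, c, d)"
    by (cases m) auto
  have "cong_I q (x12 * x21 ^ a) (scal (inverse (qsq q) ^ a) * (x21 ^ a * x12))"
    by (rule cong_I_commute_power[OF cong_I_x12_x21[OF assms]])
  from cong_I_mult_right[OF this, of "x12 ^ b * x11 ^ c * x22 ^ d"]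
  have "cong_I q (x12 * pbw_monomial m) (scal (inverse (qsq q) ^ a) * pbw_monomial (a, Suc b, c, d))"
    by (simp only: m pbw_monomial_eq mult.assoc power_Suc)
  then show ?thesis
    using pbw_reducible_cong pbw_reducible_scal_mult pbw_reducible_pbw_monomial by blast
qed

lemma pbw_reducible_x11_mult: "pbw_reducible q (x11 * pbw_monomial m)"
proof -
  obtain a b c d where m: "m = (a, b, c, d)"
    by (cases m) auto
  have "cong_I q (x11 * x21 ^ a) (scal (inverse (qsq q) ^ a) * (x21 ^ a * x11))"
    by (rule cong_I_commute_power[OF cong_I_x11_x21])
  from cong_I_mult_right[OF this, of "x12 ^ b * x11 ^ c * x22 ^ d"]
  have "cong_I q (x11 * pbw_monomial m)
                 (scal (inverse (qsq q) ^ a) * x21 ^ a * (x11 * x12 ^ b) * (x11 ^ c * x22 ^ d))"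
    by (simp only: m pbw_monomial_eq mult.assoc)
  moreover have "cong_I q (x11 * x12 ^ b) (x12 ^ b * x11)"
    by (rule cong_I_commute_power'[OF cong_I_x11_x12])
  note cong_I_mult_right[OF cong_I_mult_left[OF this], of "scal (inverse (qsq q) ^ a) * x21 ^ a"
      "x11 ^ c * x22 ^ d"]
  ultimately have "cong_I q (x11 * pbw_monomial m)
                             (scal (inverse (qsq q) ^ a) * pbw_monomial (a, b, Suc c, d))"
    by (metis (no_types, lifting) cong_I_trans pbw_monomial_eq mult.assoc power_Suc)
  then show ?thesis
    using pbw_reducible_cong pbw_reducible_scal_mult pbw_reducible_pbw_monomial by blast
qed

(* Moving x22 past x11 is the only reordering that is not a rescaling: it creates a term x21 x12. *)
lemma pbw_reducible_x22_mult_x11_power: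
  assumes "q \<noteq> 0"
  shows "pbw_reducible q (x22 * (x11 ^ c * x22 ^ d))"
proof (induction c)
  case 0
  have "x22 * (x11 ^ 0 * x22 ^ d) = pbw_monomial (0, 0, 0, Suc d)"
    by (simp add: pbw_monomial_eq)
  then show ?case
    by (simp add: pbw_reducible_pbw_monomial)
next
  case (Suc c)
  have "cong_I q (x22 * x11 * (x11 ^ c * x22 ^ d))
                 ((x11 * x22 + scal (1 - inverse (qsq q)) * (x21 * x12)) * (x11 ^ c * x22 ^ d))"
    by (rule cong_I_mult_right[OF cong_I_x22_x11[OF assms]])
  moreover have "(x11 * x22 + scal (1 - inverse (qsq q)) * (x21 * x12)) * (x11 ^ c * x22 ^ d)
      = x11 * (x22 * (x11 ^ c * x22 ^ d)) + scal (1 - inverse (qsq q)) * pbw_monomial (1, 1, c, d)"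
    by (simp add: distrib_right pbw_monomial_eq mult.assoc)
  ultimately show ?case
    using Suc by (simp add: mult.assoc pbw_reducible_cong pbw_reducible_add pbw_reducible_scal_mult
        pbw_reducible_pbw_monomial pbw_reducible_mult_left pbw_reducible_x11_mult)
qed

lemma pbw_reducible_x22_mult:
  assumes "q \<noteq> 0"
  shows "pbw_reducible q (x22 * pbw_monomial m)"
proof -
  obtain a b c d where m: "m = (a, b, c, d)"
    by (cases m) auto
  have "cong_I q (x22 * x21 ^ a) (x21 ^ a * x22)"
    by (rule cong_I_commute_power'[OF cong_I_x22_x21])
  from cong_I_mult_right[OF this, of "x12 ^ b * (x11 ^ c * x22 ^ d)"]
  have "cong_I q (x22 * pbw_monomial m) (x21 ^ a * ((x22 * x12 ^ b) * (x11 ^ c * x22 ^ d)))"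
    by (simp only: m pbw_monomial_eq mult.assoc)
  moreover have "cong_I q (x22 * x12 ^ b) (scal (qsq q ^ b) * (x12 ^ b * x22))"
    by (rule cong_I_commute_power[OF cong_I_x22_x12[OF assms]])
  note cong_I_mult_left[OF cong_I_mult_right[OF this, of "x11 ^ c * x22 ^ d"], of "x21 ^ a"]
  moreover have "pbw_reducible q (x21 ^ a * (scal (qsq q ^ b) * (x12 ^ b * x22) * (x11 ^ c * x22 ^ d)))"
    using pbw_reducible_x22_mult_x11_power[OF assms]
    by (simp add: mult.assoc mult_scal_left_commute pbw_reducible_scal_mult
        pbw_reducible_mult_left_power pbw_reducible_x21_mult pbw_reducible_x12_mult[OF assms])
  ultimately show ?thesis
    using cong_I_trans pbw_reducible_cong by blast
qed

theorem pbw_spanning: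
  assumes "q \<noteq> 0"
  shows "pbw_reducible q f"
proof -
  have gen_mult: "pbw_reducible q (gen_el x * pbw_monomial m)" for x m
    by (cases x) (simp_all add: pbw_reducible_x11_mult pbw_reducible_x12_mult[OF assms]
        pbw_reducible_x21_mult pbw_reducible_x22_mult[OF assms])
  have word: "pbw_reducible q (Poly_Mapping.single (Word xs) 1)" for xs
  proof (induction xs)
    case Nil
    have "Poly_Mapping.single (Word []) 1 = pbw_monomial (0, 0, 0, 0)"
      by (simp add: pbw_monomial_def)
    then show ?case
      by (simp add: pbw_reducible_pbw_monomial)
  next
    case (Cons x xs)
    have "Poly_Mapping.single (Word (x # xs)) 1 = gen_el x * Poly_Mapping.single (Word xs) 1"
      by (simp add: gen_el_def mult_single)
    then show ?case
      using pbw_reducible_mult_left[OF gen_mult Cons] by simp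
  qed
  show ?thesis
  proof (induction f rule: poly_mapping_add_single_induct)
    case (2 f w c)
    obtain xs where "w = Word xs"
      by (cases w) auto
    then have "Poly_Mapping.single w c = scal c * Poly_Mapping.single (Word xs) 1"
      by (simp add: scal_def mult_single)
    then show ?case
      using 2 word by (simp add: pbw_reducible_add pbw_reducible_scal_mult)
  qed (rule pbw_reducible_zero)
qed

section \<open>The Fock representation\<close>

(* If u lists the coefficients of f in the ordered monomials, fock (qsq q) x u lists those of x * f. *)
definition fock :: "complex \<Rightarrow> pbw_index gen_action" where
  "fock Q x u = (\<lambda>(a, b, c, d). case x of
      X21 \<Rightarrow> (if a = 0 then 0 else u (a - 1, b, c, d))
    | X12 \<Rightarrow> (if b = 0 then 0 else inverse Q ^ a * u (a, b - 1, c, d))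
    | X11 \<Rightarrow> (if c = 0 then 0 else inverse Q ^ a * u (a, b, c - 1, d))
    | X22 \<Rightarrow> (if d = 0 then 0 else Q ^ b * u (a, b, c, d - 1))
             + (if a = 0 \<or> b = 0 then 0 else (1 - inverse Q ^ (c + 1)) * u (a - 1, b - 1, c + 1, d)))"

lemma fock_X21: "fock Q X21 u (a, b, c, d) = (if a = 0 then 0 else u (a - 1, b, c, d))"
  by (simp add: fock_def)

lemma fock_X12: "fock Q X12 u (a, b, c, d) = (if b = 0 then 0 else inverse Q ^ a * u (a, b - 1, c, d))"
  by (simp add: fock_def)

lemma fock_X11: "fock Q X11 u (a, b, c, d) = (if c = 0 then 0 else inverse Q ^ a * u (a, b, c - 1, d))"
  by (simp add: fock_def)

lemma fock_X22:
  "fock Q X22 u (a, b, c, d) = (if d = 0 then 0 else Q ^ b * u (a, b, c, d - 1))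
     + (if a = 0 \<or> b = 0 then 0 else (1 - inverse Q ^ (c + 1)) * u (a - 1, b - 1, c + 1, d))"
  by (simp add: fock_def)

lemmas fock_simps = fock_X21 fock_X12 fock_X11 fock_X22

lemma linear_op_fock: "linear_op (fock Q x)"
  by (cases x) (simp_all add: linear_op_def fun_eq_iff fock_simps algebra_simps)

lemma fock_rels:
  assumes "Q \<noteq> 0"
  shows "fock Q X11 (fock Q X12 u) = fock Q X12 (fock Q X11 u)"
    and "fock Q X21 (fock Q X22 u) = fock Q X22 (fock Q X21 u)"
    and "(\<lambda>m. fock Q X11 (fock Q X22 u) m - fock Q X22 (fock Q X11 u) m
             + (fock Q X21 (fock Q X12 u) m - fock Q X12 (fock Q X21 u) m)) = (\<lambda>m. 0)"
    and "fock Q X11 (fock Q X21 u) = (\<lambda>m. inverse Q * fock Q X21 (fock Q X11 u) m)"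
    and "fock Q X12 (fock Q X22 u) = (\<lambda>m. inverse Q * fock Q X22 (fock Q X12 u) m)"
    and "fock Q X21 (fock Q X12 u) = (\<lambda>m. Q * fock Q X12 (fock Q X21 u) m)"
  using assms
  by (simp_all add: fun_eq_iff fock_simps algebra_simps split: nat_diff_split)

lemma falg_action_fock_rel:
  assumes "q \<noteq> 0" "r \<in> rels_I q"
  shows "falg_action (fock (qsq q)) r u = (\<lambda>m. 0)"
proof -
  have "qsq q \<noteq> 0"
    using assms(1) by (simp add: qsq_def)
  note rels = fock_rels[OF this]
  note action = fun_eq_iff falg_action_diff falg_action_add falg_action_scal
    falg_action_mult[OF linear_op_fock] falg_action_gen
  show ?thesis
    using assms(2) unfolding rels_I_eq
  proof (elim insertE emptyE)
    assume "r = (x11 * x22 - x22 * x11) + (x21 * x12 - x12 * x21)"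
    then show ?thesis
      using rels(3) by (simp add: action)
  qed (simp_all add: action rels(1,2,4,5,6))
qed

lemma falg_action_fock_ideal:
  assumes "q \<noteq> 0" "f \<in> ideal_I q"
  shows "falg_action (fock (qsq q)) f u = (\<lambda>m. 0)"
  using assms(2)
proof (induction f arbitrary: u rule: ideal_I.induct)
  case (gen r)
  then show ?case
    using falg_action_fock_rel[OF assms(1)] by blast
next
  case (lmult a c)
  then show ?case
    by (simp add: falg_action_mult[OF linear_op_fock]
        linear_op_zero[OF linear_op_falg_action[OF linear_op_fock]])
qed (simp_all add: fun_eq_iff falg_action_zero falg_action_add falg_action_mult[OF linear_op_fock])

definition delta :: "'a \<Rightarrow> 'a cfun" where
  "delta m = (\<lambda>m'. if m' = m then 1 else 0)"

definition fock_vector :: "complex \<Rightarrow> falg \<Rightarrow> pbw_index cfun" where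
  "fock_vector Q f = falg_action (fock Q) f (delta (0, 0, 0, 0))"

lemma fock_vector_pbw_monomial: "fock_vector Q (pbw_monomial m) = delta m"
proof -
  obtain a b c d where m: "m = (a, b, c, d)"
    by (cases m) auto
  have "(fock Q X22 ^^ d) (delta (0, 0, 0, 0)) = delta (0, 0, 0, d)"
    by (induction d) (auto simp: fun_eq_iff fock_simps delta_def)
  moreover have "(fock Q X11 ^^ c) (delta (0, 0, 0, d)) = delta (0, 0, c, d)"
    by (induction c) (auto simp: fun_eq_iff fock_simps delta_def)
  moreover have "(fock Q X12 ^^ b) (delta (0, 0, c, d)) = delta (0, b, c, d)"
    by (induction b) (auto simp: fun_eq_iff fock_simps delta_def)
  moreover have "(fock Q X21 ^^ a) (delta (0, b, c, d)) = delta (a, b, c, d)"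
    by (induction a) (auto simp: fun_eq_iff fock_simps delta_def)
  ultimately show ?thesis
    by (intro ext) (simp add: m fock_vector_def pbw_monomial_def falg_action_single
        word_action_append word_action_replicate)
qed

lemma fock_vector_pbw_supported:
  assumes "pbw_supported g"
  shows "fock_vector Q g m = Poly_Mapping.lookup g (pbw_word m)"
  using assms
proof (induction rule: pbw_supported_induct)
  case zero
  show ?case
    by (simp add: fock_vector_def falg_action_zero)
next
  case (add f m' c)
  have "fock_vector Q (scal c * pbw_monomial m') m = c * fock_vector Q (pbw_monomial m') m"
    by (simp add: fock_vector_def falg_action_mult[OF linear_op_fock] falg_action_scal)
  then have "fock_vector Q (scal c * pbw_monomial m') m = c * delta m' m"
    by (simp add: fock_vector_pbw_monomial)
  moreover have "Poly_Mapping.lookup (scal c * pbw_monomial m') (pbw_word m) = c * delta m' m"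
    using inj_pbw_word
    by (auto simp: lookup_scal_mult pbw_monomial_def delta_def lookup_single when_def inj_eq)
  ultimately show ?case
    using add.IH by (simp add: fock_vector_def falg_action_add lookup_add)
qed

lemma fock_vector_cong:
  assumes "q \<noteq> 0" "cong_I q f g"
  shows "fock_vector (qsq q) f = fock_vector (qsq q) g"
  using falg_action_fock_ideal[OF assms(1) assms(2)[unfolded cong_I_def]]
  by (simp add: fock_vector_def fun_eq_iff falg_action_diff)

lemma fock_vector_eq_lookup:
  assumes "q \<noteq> 0"
  obtains g where "pbw_supported g" "cong_I q f g"
    and "\<And>m. fock_vector (qsq q) f m = Poly_Mapping.lookup g (pbw_word m)"
proof -
  obtain g where g: "pbw_supported g" "cong_I q f g"
    using pbw_spanning[OF assms, of f] unfolding pbw_reducible_def by blast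
  have "fock_vector (qsq q) f m = Poly_Mapping.lookup g (pbw_word m)" for m
    using fock_vector_cong[OF assms g(2)] fock_vector_pbw_supported[OF g(1)] by simp
  with g that show ?thesis
    by blast
qed

theorem ideal_I_iff_fock_vector_eq_0:
  assumes "q \<noteq> 0"
  shows "f \<in> ideal_I q \<longleftrightarrow> fock_vector (qsq q) f = (\<lambda>m. 0)"
proof
  assume "f \<in> ideal_I q"
  then show "fock_vector (qsq q) f = (\<lambda>m. 0)"
    by (simp add: fock_vector_def falg_action_fock_ideal[OF assms])
next
  assume f: "fock_vector (qsq q) f = (\<lambda>m. 0)"
  obtain g where g: "pbw_supported g" "cong_I q f g"
    and lookup: "\<And>m. fock_vector (qsq q) f m = Poly_Mapping.lookup g (pbw_word m)"
    using fock_vector_eq_lookup[OF assms] by blast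
  have "Poly_Mapping.keys g = {}"
  proof (rule ccontr)
    assume "Poly_Mapping.keys g \<noteq> {}"
    then obtain m where "pbw_word m \<in> Poly_Mapping.keys g"
      using g(1) unfolding pbw_supported_def by blast
    then show False
      using f lookup[of m] by (simp add: in_keys_iff)
  qed
  then show "f \<in> ideal_I q"
    using g(2) by (simp add: cong_I_def)
qed

lemma finite_fock_vector_support:
  assumes "q \<noteq> 0"
  shows "finite {m. fock_vector (qsq q) f m \<noteq> 0}"
proof -
  obtain g where lookup: "\<And>m. fock_vector (qsq q) f m = Poly_Mapping.lookup g (pbw_word m)"
    using fock_vector_eq_lookup[OF assms] by blast
  have "{m. fock_vector (qsq q) f m \<noteq> 0} = pbw_word -` Poly_Mapping.keys g"
    by (auto simp: lookup in_keys_iff)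
  then show ?thesis
    using finite_vimageI[OF finite_keys inj_pbw_word] by simp
qed

section \<open>Injectivity of alpha_I\<close>

lemma tens_add: "tens A x (\<lambda>l. g l + g' l) k = tens A x g k + tens A x g' k"
  by (simp add: tens_def distrib_left sum.distrib)

lemma tens_diff: "tens A x (\<lambda>l. g l - g' l) k = tens A x g k - tens A x g' k"
  by (simp add: tens_def right_diff_distrib sum_subtractf)

lemma tens_zero: "tens A x (\<lambda>l. 0) k = 0"
  by (simp add: tens_def)

lemma tens_uminus: "tens A x (\<lambda>l. - g l) k = - tens A x g k"
  by (simp add: tens_def sum_negf)

lemma tens_scal_mult: "tens A 1 (\<lambda>l. scal (v $ l) * y) k = scal ((A *v v) $ k) * y"
  by (simp add: tens_def matrix_vector_mult_def scal_sum sum_distrib_right scal_mult mult.assoc)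

lemma falg_action_tens:
  assumes "\<And>x. linear_op (G x)"
  shows "falg_action G (tens A 1 g k) u m = (\<Sum>l\<in>UNIV. A $ k $ l * falg_action G (g l) u m)"
  by (simp add: tens_def falg_action_sum falg_action_mult[OF assms] falg_action_scal)

lemma vanishing_by_descent:
  fixes B :: "complex^'n^'n" and u :: "'n \<Rightarrow> nat \<times> 'r \<Rightarrow> complex"
  assumes fin: "\<And>k. finite {m. u k m \<noteq> 0}"
    and rec: "\<And>k a r. u k (a, r) = (\<Sum>l\<in>UNIV. B $ k $ l * u l (Suc a, r))"
  shows "u k m = 0"
proof -
  define N where "N = Max (insert 0 (fst ` (\<Union>k. {m. u k m \<noteq> 0})))"
  have large: "u k (a, r) = 0" if "N < a" for k a r
  proof (rule ccontr)
    assume "u k (a, r) \<noteq> 0"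
    then have "a \<le> N"
      unfolding N_def using fin by (intro Max_ge) force+
    with that show False
      by simp
  qed
  have "\<forall>k a r. N < a + j \<longrightarrow> u k (a, r) = 0" for j
  proof (induction j)
    case (Suc j)
    show ?case
    proof (intro allI impI)
      fix k a r
      assume "N < a + Suc j"
      then show "u k (a, r) = 0"
        using Suc large[of a k r] rec[of k a r] by (cases "N < a") auto
    qed
  qed (simp add: large)
  from this[of "Suc N"] show ?thesis
    by (cases m) auto
qed

lemma ideal_I_of_tens_minus_x21:
  fixes B :: "complex^'n^'n"
  assumes q: "q \<noteq> 0" and h: "\<And>k. tens B 1 g k - x21 * g k \<in> ideal_I q"
  shows "g k \<in> ideal_I q"
proof -
  define u where "u k = fock_vector (qsq q) (g k)" for k
  have rec: "u k (a, r) = (\<Sum>l\<in>UNIV. B $ k $ l * u l (Suc a, r))" for k a r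
  proof -
    obtain b c d where r: "r = (b, c, d)"
      by (cases r) auto
    have "fock_vector (qsq q) (tens B 1 g k - x21 * g k) (Suc a, r) = 0"
      using h[of k] by (simp add: ideal_I_iff_fock_vector_eq_0[OF q])
    then show ?thesis
      by (simp add: r u_def fock_vector_def falg_action_diff falg_action_tens[OF linear_op_fock]
          falg_action_mult[OF linear_op_fock] falg_action_gen fock_X21)
  qed
  have fin: "finite {m. u k m \<noteq> 0}" for k
    by (simp add: u_def finite_fock_vector_support[OF q])
  have "u k = (\<lambda>m. 0)"
    by (rule ext) (rule vanishing_by_descent[OF fin rec])
  then show ?thesis
    by (simp add: ideal_I_iff_fock_vector_eq_0[OF q] u_def)
qed

lemma alpha_I_is_injective:
  assumes "q \<noteq> 0"
  shows "alpha_I_injective q B1 B2 j"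
  unfolding alpha_I_injective_def
proof (intro allI impI)
  fix g g'
  assume "case (alpha_I B1 B2 j g, alpha_I B1 B2 j g') of ((a, b, c), a', b', c') \<Rightarrow>
            zero_mod q (\<lambda>k. a k - a' k) \<and> zero_mod q (\<lambda>k. b k - b' k) \<and> zero_mod q (\<lambda>k. c k - c' k)"
  then have "tens B1 1 (\<lambda>l. g l - g' l) k - x21 * (g k - g' k) \<in> ideal_I q" for k
    by (simp add: alpha_I_def zero_mod_def tens_diff algebra_simps)
  then show "zero_mod q (\<lambda>k. g k - g' k)"
    unfolding zero_mod_def using ideal_I_of_tens_minus_x21[OF assms] by blast
qed

section \<open>Surjectivity of beta_I and stability\<close>

definition matrix_action :: "complex^'m^'n \<Rightarrow> 'm cfun \<Rightarrow> 'n cfun" where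
  "matrix_action A u = (\<lambda>k. \<Sum>l\<in>UNIV. A $ k $ l * u l)"

lemma linear_op_matrix_action: "linear_op (matrix_action A)"
  by (simp add: linear_op_def matrix_action_def distrib_left sum.distrib sum_distrib_left
      mult.left_commute)

lemma vec_lambda_matrix_action: "vec_lambda (matrix_action A u) = A *v vec_lambda u"
  by (simp add: vec_eq_iff matrix_action_def matrix_vector_mult_def)

lemma matrix_action_delta: "matrix_action A (delta l) = (\<lambda>k. A $ k $ l)"
  by (simp add: matrix_action_def delta_def if_distrib cong: if_cong)

definition quiver_action :: "complex^'n^'n \<Rightarrow> complex^'n^'n \<Rightarrow> 'n gen_action" where
  "quiver_action B1 B2 x = (case x of
     X21 \<Rightarrow> matrix_action B1 | X22 \<Rightarrow> matrix_action B2 | _ \<Rightarrow> (\<lambda>u k. 0))"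

lemma quiver_action_simps [simp]:
  "quiver_action B1 B2 X21 = matrix_action B1"
  "quiver_action B1 B2 X22 = matrix_action B2"
  "quiver_action B1 B2 X11 = (\<lambda>u k. 0)"
  "quiver_action B1 B2 X12 = (\<lambda>u k. 0)"
  by (simp_all add: quiver_action_def)

lemma linear_op_quiver_action: "linear_op (quiver_action B1 B2 x)"
  by (cases x) (simp_all only: quiver_action_simps linear_op_matrix_action,
      simp_all add: linear_op_def)

(* The contraction e_k \<otimes> f \<mapsto> f.e_k, with V \<otimes> falg encoded as 'n \<Rightarrow> falg as in tens. *)
definition quiver_contract :: "complex^'n^'n \<Rightarrow> complex^'n^'n \<Rightarrow> ('n \<Rightarrow> falg) \<Rightarrow> 'n cfun" where
  "quiver_contract B1 B2 g = (\<lambda>m. \<Sum>k\<in>UNIV. falg_action (quiver_action B1 B2) (g k) (delta k) m)"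

lemma quiver_contract_add:
  "quiver_contract B1 B2 (\<lambda>k. g k + g' k) m = quiver_contract B1 B2 g m + quiver_contract B1 B2 g' m"
  by (simp add: quiver_contract_def falg_action_add sum.distrib)

lemma quiver_contract_diff:
  "quiver_contract B1 B2 (\<lambda>k. g k - g' k) m = quiver_contract B1 B2 g m - quiver_contract B1 B2 g' m"
  by (simp add: quiver_contract_def falg_action_diff sum_subtractf)

lemma quiver_contract_scal: "quiver_contract B1 B2 (\<lambda>k. scal (v $ k)) m = v $ m"
  by (simp add: quiver_contract_def falg_action_scal delta_def if_distrib cong: if_cong)

lemma quiver_contract_gen_mult:
  "quiver_contract B1 B2 (\<lambda>k. gen_el x * g k) m
     = (\<Sum>l\<in>UNIV. quiver_action B1 B2 x (falg_action (quiver_action B1 B2) (g l) (delta l)) m)"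
  by (simp add: quiver_contract_def falg_action_mult[OF linear_op_quiver_action] falg_action_gen)

lemma quiver_contract_tens:
  "quiver_contract B1 B2 (\<lambda>k. tens A 1 g k) m
     = (\<Sum>l\<in>UNIV. falg_action (quiver_action B1 B2) (g l) (matrix_action A (delta l)) m)"
proof -
  let ?\<rho> = "falg_action (quiver_action B1 B2)"
  have col: "matrix_action A (delta l) = (\<lambda>m. \<Sum>k\<in>UNIV. A $ k $ l * delta k m)" for l
    by (simp add: matrix_action_def delta_def if_distrib cong: if_cong)
  have "quiver_contract B1 B2 (\<lambda>k. tens A 1 g k) m
      = (\<Sum>k\<in>UNIV. \<Sum>l\<in>UNIV. A $ k $ l * ?\<rho> (g l) (delta k) m)"
    by (simp add: quiver_contract_def falg_action_tens[OF linear_op_quiver_action])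
  also have "\<dots> = (\<Sum>l\<in>UNIV. \<Sum>k\<in>UNIV. A $ k $ l * ?\<rho> (g l) (delta k) m)"
    by (rule sum.swap)
  also have "\<dots> = (\<Sum>l\<in>UNIV. ?\<rho> (g l) (matrix_action A (delta l)) m)"
    by (simp add: col linear_op_sum[OF linear_op_falg_action[OF linear_op_quiver_action]]
        linear_op_scale[OF linear_op_falg_action[OF linear_op_quiver_action]])
  finally show ?thesis .
qed

locale adhm_invariant_subspace =
  fixes S :: "(complex^'n) set"
    and B1 B2 :: "complex^'n^'n" and i :: "complex^'m^'n" and j :: "complex^'n^'m"
  assumes subspace: "vec.subspace S"
    and B1_invariant: "\<And>v. v \<in> S \<Longrightarrow> B1 *v v \<in> S"
    and B2_invariant: "\<And>v. v \<in> S \<Longrightarrow> B2 *v v \<in> S"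
    and range_i: "\<And>w. i *v w \<in> S"
    and commutator: "B1 ** B2 - B2 ** B1 + i ** j = 0"
begin

definition S_fun :: "'n cfun set" where
  "S_fun = {u. vec_lambda u \<in> S}"

abbreviation "\<rho> \<equiv> falg_action (quiver_action B1 B2)"

lemma S_fun_add:
  assumes "u \<in> S_fun" "v \<in> S_fun"
  shows "(\<lambda>k. u k + v k) \<in> S_fun"
proof -
  have "vec_lambda (\<lambda>k. u k + v k) = vec_lambda u + vec_lambda v"
    by (simp add: vec_eq_iff)
  then show ?thesis
    using assms vec.subspace_add[OF subspace] by (simp add: S_fun_def)
qed

lemma S_fun_scale:
  assumes "u \<in> S_fun"
  shows "(\<lambda>k. c * u k) \<in> S_fun"
proof -
  have "vec_lambda (\<lambda>k. c * u k) = c *s vec_lambda u"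
    by (simp add: vec_eq_iff)
  then show ?thesis
    using assms vec.subspace_scale[OF subspace] by (simp add: S_fun_def)
qed

lemma S_fun_zero: "(\<lambda>k. 0) \<in> S_fun"
  using vec.subspace_0[OF subspace] by (simp add: S_fun_def flip: zero_vec_def)

lemma S_fun_diff: "u \<in> S_fun \<Longrightarrow> v \<in> S_fun \<Longrightarrow> (\<lambda>k. u k - v k) \<in> S_fun"
  using S_fun_add[of u "\<lambda>k. (-1) * v k"] S_fun_scale[of v "-1"] by simp

lemma S_fun_sum: "(\<And>s. s \<in> F \<Longrightarrow> U s \<in> S_fun) \<Longrightarrow> (\<lambda>k. \<Sum>s\<in>F. U s k) \<in> S_fun"
  by (induction F rule: infinite_finite_induct) (simp_all add: S_fun_zero S_fun_add)

lemma S_fun_matrix_action_B1: "u \<in> S_fun \<Longrightarrow> matrix_action B1 u \<in> S_fun"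
  using B1_invariant by (simp add: S_fun_def vec_lambda_matrix_action)

lemma S_fun_matrix_action_B2: "u \<in> S_fun \<Longrightarrow> matrix_action B2 u \<in> S_fun"
  using B2_invariant by (simp add: S_fun_def vec_lambda_matrix_action)

lemma S_fun_quiver_action: "u \<in> S_fun \<Longrightarrow> quiver_action B1 B2 x u \<in> S_fun"
  by (cases x) (simp_all add: S_fun_zero S_fun_matrix_action_B1 S_fun_matrix_action_B2)

lemma S_fun_falg_action: "u \<in> S_fun \<Longrightarrow> \<rho> f u \<in> S_fun"
proof -
  assume "u \<in> S_fun"
  then have "word_action (quiver_action B1 B2) xs u \<in> S_fun" for xs
    by (induction xs) (simp_all add: S_fun_quiver_action)
  then show ?thesis
    unfolding falg_action_def by (intro S_fun_sum S_fun_scale)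
qed

lemma S_fun_column_i: "(\<lambda>k. i $ k $ l) \<in> S_fun"
proof -
  have "vec_lambda (\<lambda>k. i $ k $ l) = i *v axis l 1"
    by (simp add: vec_eq_iff matrix_vector_mult_def axis_def if_distrib cong: if_cong)
  then show ?thesis
    using range_i by (simp add: S_fun_def)
qed

lemma S_fun_commutator:
  "(\<lambda>k. matrix_action B1 (matrix_action B2 u) k - matrix_action B2 (matrix_action B1 u) k) \<in> S_fun"
proof -
  have "B1 *v (B2 *v vec_lambda u) - B2 *v (B1 *v vec_lambda u)
      = (B1 ** B2 - B2 ** B1) *v vec_lambda u"
    by (simp add: matrix_vector_mul_assoc matrix_vector_mult_diff_rdistrib)
  also have "\<dots> = (0 - i ** j) *v vec_lambda u"
    by (metis commutator eq_diff_eq)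
  also have "\<dots> = i *v (0 - j *v vec_lambda u)"
    by (simp only: matrix_vector_mult_diff_rdistrib matrix_vector_mult_diff_distrib
        matrix_vector_mult_0 matrix_vector_mult_0_right matrix_vector_mul_assoc)
  finally show ?thesis
    using range_i by (simp add: S_fun_def vec_lambda_matrix_action[symmetric] vec_eq_iff)
qed

lemma S_fun_falg_action_rel:
  assumes "r \<in> rels_I q"
  shows "\<rho> r u \<in> S_fun"
proof -
  note action = falg_action_diff falg_action_add falg_action_scal
    falg_action_mult[OF linear_op_quiver_action] falg_action_gen
  let ?comm = "\<lambda>k. matrix_action B1 (matrix_action B2 u) k - matrix_action B2 (matrix_action B1 u) k"
  from assms have "\<rho> r u = (\<lambda>k. 0) \<or> \<rho> r u = ?comm"
    unfolding rels_I_eq by (elim insertE emptyE) (simp_all add: fun_eq_iff action matrix_action_def)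
  then show ?thesis
    using S_fun_zero S_fun_commutator by auto
qed

lemma S_fun_falg_action_ideal: "f \<in> ideal_I q \<Longrightarrow> \<rho> f u \<in> S_fun"
proof (induction f arbitrary: u rule: ideal_I.induct)
  case (gen r)
  then show ?case
    by (rule S_fun_falg_action_rel)
next
  case zero
  show ?case
    using S_fun_zero by (simp add: falg_action_def)
next
  case (add a b)
  then show ?case
    using S_fun_add[OF add.IH] by (simp add: falg_action_add[abs_def])
next
  case (lmult a c)
  then show ?case
    by (simp add: falg_action_mult[OF linear_op_quiver_action] S_fun_falg_action)
next
  case (rmult a c)
  then show ?case
    by (simp add: falg_action_mult[OF linear_op_quiver_action])
qed

lemma S_fun_commute_falg_action:
  assumes Y: "linear_op Y"
    and YG: "\<And>x v. (\<lambda>k. Y (quiver_action B1 B2 x v) k - quiver_action B1 B2 x (Y v) k) \<in> S_fun"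
  shows "(\<lambda>k. Y (\<rho> f u) k - \<rho> f (Y u) k) \<in> S_fun"
proof -
  let ?W = "word_action (quiver_action B1 B2)"
  have word: "(\<lambda>k. Y (?W xs u) k - ?W xs (Y u) k) \<in> S_fun" for xs u
  proof (induction xs arbitrary: u)
    case Nil
    show ?case
      using S_fun_zero by simp
  next
    case (Cons x xs)
    let ?G = "quiver_action B1 B2 x"
    have "(\<lambda>k. Y (?G (?W xs u)) k - ?G (?W xs (Y u)) k)
        = (\<lambda>k. (Y (?G (?W xs u)) k - ?G (Y (?W xs u)) k)
               + ?G (\<lambda>k. Y (?W xs u) k - ?W xs (Y u) k) k)"
      by (simp add: linear_op_diff[OF linear_op_quiver_action])
    then show ?case
      using S_fun_add[OF YG S_fun_quiver_action[OF Cons.IH]] by simp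
  qed
  have "(\<lambda>k. Y (\<rho> f u) k - \<rho> f (Y u) k)
      = (\<lambda>k. \<Sum>w\<in>Poly_Mapping.keys f.
              Poly_Mapping.lookup f w * (Y (?W (word_letters w) u) k - ?W (word_letters w) (Y u) k))"
    by (simp add: falg_action_def linear_op_sum[OF Y] linear_op_scale[OF Y]
        right_diff_distrib sum_subtractf)
  also have "\<dots> \<in> S_fun"
    by (intro S_fun_sum S_fun_scale word)
  finally show ?thesis .
qed

lemma S_fun_commute_B1: "(\<lambda>k. matrix_action B1 (\<rho> f u) k - \<rho> f (matrix_action B1 u) k) \<in> S_fun"
proof (rule S_fun_commute_falg_action[OF linear_op_matrix_action])
  fix x v
  show "(\<lambda>k. matrix_action B1 (quiver_action B1 B2 x v) k
             - quiver_action B1 B2 x (matrix_action B1 v) k) \<in> S_fun"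
    using S_fun_zero S_fun_commutator by (cases x) (simp_all add: matrix_action_def)
qed

lemma S_fun_commute_B2: "(\<lambda>k. matrix_action B2 (\<rho> f u) k - \<rho> f (matrix_action B2 u) k) \<in> S_fun"
proof (rule S_fun_commute_falg_action[OF linear_op_matrix_action])
  fix x v
  show "(\<lambda>k. matrix_action B2 (quiver_action B1 B2 x v) k
             - quiver_action B1 B2 x (matrix_action B2 v) k) \<in> S_fun"
    using S_fun_zero S_fun_scale[OF S_fun_commutator, of "-1"]
    by (cases x) (simp_all add: matrix_action_def)
qed

lemma S_fun_quiver_contract_ideal:
  "(\<And>k. g k \<in> ideal_I q) \<Longrightarrow> quiver_contract B1 B2 g \<in> S_fun"
  unfolding quiver_contract_def by (intro S_fun_sum S_fun_falg_action_ideal)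

lemma S_fun_quiver_contract_beta_I: "quiver_contract B1 B2 (beta_I B1 B2 i f) \<in> S_fun"
proof -
  obtain a b c where f: "f = (a, b, c)"
    by (cases f) auto
  have "quiver_contract B1 B2 (beta_I B1 B2 i f)
      = (\<lambda>m. (\<Sum>l\<in>UNIV. matrix_action B2 (\<rho> (a l) (delta l)) m
                               - \<rho> (a l) (matrix_action B2 (delta l)) m)
           - (\<Sum>l\<in>UNIV. matrix_action B1 (\<rho> (b l) (delta l)) m
                         - \<rho> (b l) (matrix_action B1 (delta l)) m)
           + (\<Sum>l\<in>UNIV. \<rho> (c l) (matrix_action i (delta l)) m))"
  proof -
    have beta: "beta_I B1 B2 i f
        = (\<lambda>k. ((x22 * a k - tens B2 1 a k) - (x21 * b k - tens B1 1 b k)) + tens i 1 c k)"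
      by (simp add: beta_I_def f fun_eq_iff algebra_simps)
    show ?thesis
      unfolding beta
      by (intro ext) (simp add: quiver_contract_add quiver_contract_diff quiver_contract_gen_mult
          quiver_contract_tens sum_subtractf)
  qed
  also have "\<dots> \<in> S_fun"
    by (intro S_fun_add S_fun_diff S_fun_sum S_fun_commute_B1 S_fun_commute_B2 S_fun_falg_action)
      (simp add: matrix_action_delta S_fun_column_i)
  finally show ?thesis .
qed

lemma not_beta_I_surjective:
  assumes "v \<notin> S"
  shows "\<not> beta_I_surjective q B1 B2 i"
proof
  assume "beta_I_surjective q B1 B2 i"
  then have "\<exists>f. zero_mod q (\<lambda>k. beta_I B1 B2 i f k - scal (v $ k))"
    unfolding beta_I_surjective_def by (rule spec)
  then obtain f where f: "zero_mod q (\<lambda>k. beta_I B1 B2 i f k - scal (v $ k))" ..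
  have "quiver_contract B1 B2 (\<lambda>k. beta_I B1 B2 i f k - scal (v $ k)) \<in> S_fun"
    using f unfolding zero_mod_def by (intro S_fun_quiver_contract_ideal) blast
  then have "(\<lambda>m. quiver_contract B1 B2 (beta_I B1 B2 i f) m
               - quiver_contract B1 B2 (\<lambda>k. scal (v $ k)) m) \<in> S_fun"
    by (simp only: quiver_contract_diff[abs_def])
  from S_fun_diff[OF S_fun_quiver_contract_beta_I[of f] this] have "(\<lambda>m. v $ m) \<in> S_fun"
    by (simp add: quiver_contract_scal)
  with assms show False
    by (simp add: S_fun_def)
qed

end

lemma beta_I_add:
  "beta_I B1 B2 i (\<lambda>k. a k + a' k, \<lambda>k. b k + b' k, \<lambda>k. c k + c' k)
     = (\<lambda>k. beta_I B1 B2 i (a, b, c) k + beta_I B1 B2 i (a', b', c') k)"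
  by (simp add: beta_I_def tens_add fun_eq_iff algebra_simps)

lemma zero_in_range_beta_I: "(\<lambda>k. 0) \<in> range (beta_I B1 B2 i)"
proof -
  have "beta_I B1 B2 i (\<lambda>k. 0, \<lambda>k. 0, \<lambda>k. 0) = (\<lambda>k. 0)"
    by (simp add: beta_I_def tens_zero fun_eq_iff)
  then show ?thesis
    by (metis rangeI)
qed

lemma add_in_range_beta_I:
  assumes "g \<in> range (beta_I B1 B2 i)" "h \<in> range (beta_I B1 B2 i)"
  shows "(\<lambda>k. g k + h k) \<in> range (beta_I B1 B2 i)"
proof -
  obtain f f' where "g = beta_I B1 B2 i f" "h = beta_I B1 B2 i f'"
    using assms by blast
  moreover obtain a b c a' b' c' where "f = (a, b, c)" "f' = (a', b', c')"
    using prod_cases3 by metis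
  ultimately have "g = beta_I B1 B2 i (a, b, c)" "h = beta_I B1 B2 i (a', b', c')"
    by simp_all
  then have "(\<lambda>k. g k + h k) = beta_I B1 B2 i (\<lambda>k. a k + a' k, \<lambda>k. b k + b' k, \<lambda>k. c k + c' k)"
    by (simp add: beta_I_add)
  then show ?thesis
    by (simp only: rangeI)
qed

lemma sum_in_range_beta_I:
  "(\<And>s. s \<in> F \<Longrightarrow> h s \<in> range (beta_I B1 B2 i))
     \<Longrightarrow> (\<lambda>k. \<Sum>s\<in>F. h s k) \<in> range (beta_I B1 B2 i)"
  by (induction F rule: infinite_finite_induct) (simp_all add: zero_in_range_beta_I add_in_range_beta_I)

definition beta_I_pure_preimage ::
    "complex^'n^'n \<Rightarrow> complex^'n^'n \<Rightarrow> complex^'m^'n \<Rightarrow> (complex^'n) set" where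
  "beta_I_pure_preimage B1 B2 i = {v. \<forall>y. (\<lambda>k. scal (v $ k) * y) \<in> range (beta_I B1 B2 i)}"

lemma subspace_beta_I_pure_preimage: "vec.subspace (beta_I_pure_preimage B1 B2 i)"
  unfolding vec.subspace_def beta_I_pure_preimage_def
proof (intro conjI ballI allI CollectI)
  show "(\<lambda>k. scal (0 $ k) * y) \<in> range (beta_I B1 B2 i)" for y
    using zero_in_range_beta_I by (simp add: scal_zero)
next
  fix v w y
  assume "v \<in> {v. \<forall>y. (\<lambda>k. scal (v $ k) * y) \<in> range (beta_I B1 B2 i)}"
    and "w \<in> {v. \<forall>y. (\<lambda>k. scal (v $ k) * y) \<in> range (beta_I B1 B2 i)}"
  then have "(\<lambda>k. scal (v $ k) * y) \<in> range (beta_I B1 B2 i)"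
    and "(\<lambda>k. scal (w $ k) * y) \<in> range (beta_I B1 B2 i)"
    by blast+
  from add_in_range_beta_I[OF this] show "(\<lambda>k. scal ((v + w) $ k) * y) \<in> range (beta_I B1 B2 i)"
    by (simp add: scal_add distrib_right)
next
  fix c :: complex and v y
  assume "v \<in> {v. \<forall>y. (\<lambda>k. scal (v $ k) * y) \<in> range (beta_I B1 B2 i)}"
  then have "(\<lambda>k. scal (v $ k) * (scal c * y)) \<in> range (beta_I B1 B2 i)"
    by blast
  moreover have "(\<lambda>k. scal ((c *s v) $ k) * y) = (\<lambda>k. scal (v $ k) * (scal c * y))"
    by (simp add: fun_eq_iff scal_scal mult.commute)
  ultimately show "(\<lambda>k. scal ((c *s v) $ k) * y) \<in> range (beta_I B1 B2 i)"
    by simp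
qed

lemma B1_mult_in_beta_I_pure_preimage:
  assumes "v \<in> beta_I_pure_preimage B1 B2 i"
  shows "B1 *v v \<in> beta_I_pure_preimage B1 B2 i"
  unfolding beta_I_pure_preimage_def
proof (intro CollectI allI)
  fix y
  have "beta_I B1 B2 i (\<lambda>k. 0, \<lambda>l. scal (v $ l) * y, \<lambda>k. 0)
      = (\<lambda>k. scal ((B1 *v v) $ k) * y - scal (v $ k) * (x21 * y))"
    by (simp add: beta_I_def tens_zero tens_scal_mult fun_eq_iff mult_scal_left_commute)
  then have "(\<lambda>k. scal ((B1 *v v) $ k) * y - scal (v $ k) * (x21 * y)) \<in> range (beta_I B1 B2 i)"
    by (metis rangeI)
  moreover have "(\<lambda>k. scal (v $ k) * (x21 * y)) \<in> range (beta_I B1 B2 i)"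
    using assms by (simp add: beta_I_pure_preimage_def)
  ultimately have "(\<lambda>k. (scal ((B1 *v v) $ k) * y - scal (v $ k) * (x21 * y))
                       + scal (v $ k) * (x21 * y)) \<in> range (beta_I B1 B2 i)"
    by (rule add_in_range_beta_I)
  then show "(\<lambda>k. scal ((B1 *v v) $ k) * y) \<in> range (beta_I B1 B2 i)"
    by simp
qed

lemma B2_mult_in_beta_I_pure_preimage:
  assumes "v \<in> beta_I_pure_preimage B1 B2 i"
  shows "B2 *v v \<in> beta_I_pure_preimage B1 B2 i"
  unfolding beta_I_pure_preimage_def
proof (intro CollectI allI)
  fix y
  have "beta_I B1 B2 i (\<lambda>l. - (scal (v $ l) * y), \<lambda>k. 0, \<lambda>k. 0)
      = (\<lambda>k. scal ((B2 *v v) $ k) * y - scal (v $ k) * (x22 * y))"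
    by (simp add: beta_I_def tens_zero tens_uminus tens_scal_mult fun_eq_iff mult_scal_left_commute)
  then have "(\<lambda>k. scal ((B2 *v v) $ k) * y - scal (v $ k) * (x22 * y)) \<in> range (beta_I B1 B2 i)"
    by (metis rangeI)
  moreover have "(\<lambda>k. scal (v $ k) * (x22 * y)) \<in> range (beta_I B1 B2 i)"
    using assms by (simp add: beta_I_pure_preimage_def)
  ultimately have "(\<lambda>k. (scal ((B2 *v v) $ k) * y - scal (v $ k) * (x22 * y))
                       + scal (v $ k) * (x22 * y)) \<in> range (beta_I B1 B2 i)"
    by (rule add_in_range_beta_I)
  then show "(\<lambda>k. scal ((B2 *v v) $ k) * y) \<in> range (beta_I B1 B2 i)"
    by simp
qed

lemma i_mult_in_beta_I_pure_preimage: "i *v w \<in> beta_I_pure_preimage B1 B2 i"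
  unfolding beta_I_pure_preimage_def
proof (intro CollectI allI)
  fix y
  have "beta_I B1 B2 i (\<lambda>k. 0, \<lambda>k. 0, \<lambda>l. scal (w $ l) * y) = (\<lambda>k. scal ((i *v w) $ k) * y)"
    by (simp add: beta_I_def tens_zero tens_scal_mult fun_eq_iff)
  then show "(\<lambda>k. scal ((i *v w) $ k) * y) \<in> range (beta_I B1 B2 i)"
    by (metis rangeI)
qed

lemma beta_I_surjective_if_stable:
  assumes "stable B1 B2 i j"
  shows "beta_I_surjective q B1 B2 i"
  unfolding beta_I_surjective_def
proof
  fix h
  have "beta_I_pure_preimage B1 B2 i = UNIV"
    using assms subspace_beta_I_pure_preimage B1_mult_in_beta_I_pure_preimage
      B2_mult_in_beta_I_pure_preimage i_mult_in_beta_I_pure_preimage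
    unfolding stable_def by blast
  then have "(\<lambda>k. \<Sum>l\<in>UNIV. scal (axis l 1 $ k) * h l) \<in> range (beta_I B1 B2 i)"
    by (intro sum_in_range_beta_I) (auto simp: beta_I_pure_preimage_def)
  moreover have "(\<lambda>k. \<Sum>l\<in>UNIV. scal (axis l 1 $ k) * h l) = h"
  proof
    fix k
    have "scal (axis l 1 $ k) * h l = (if l = k then h k else 0)" for l
      by (simp add: axis_def scal_one scal_zero)
    then show "(\<Sum>l\<in>UNIV. scal (axis l 1 $ k) * h l) = h k"
      by simp
  qed
  ultimately obtain f where "beta_I B1 B2 i f = h"
    by auto
  then have "zero_mod q (\<lambda>k. beta_I B1 B2 i f k - h k)"
    by (simp add: zero_mod_def ideal_I.zero)
  then show "\<exists>f. zero_mod q (\<lambda>k. beta_I B1 B2 i f k - h k)" ..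
qed

lemma stable_if_beta_I_surjective:
  assumes "B1 ** B2 - B2 ** B1 + i ** j = 0" and "beta_I_surjective q B1 B2 i"
  shows "stable B1 B2 i j"
  unfolding stable_def
proof
  assume "\<exists>S. vec.subspace S \<and> S \<noteq> UNIV \<and> (\<lambda>v. B1 *v v) ` S \<subseteq> S \<and> (\<lambda>v. B2 *v v) ` S \<subseteq> S
            \<and> range (\<lambda>w. i *v w) \<subseteq> S"
  then obtain S where S: "vec.subspace S" "S \<noteq> UNIV" "(\<lambda>v. B1 *v v) ` S \<subseteq> S"
    "(\<lambda>v. B2 *v v) ` S \<subseteq> S" "range (\<lambda>w. i *v w) \<subseteq> S"
    by blast
  interpret adhm_invariant_subspace S B1 B2 i j
    using S assms(1) by unfold_locales (auto simp: image_subset_iff)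
  obtain v where "v \<notin> S"
    using S(2) by blast
  then show False
    using not_beta_I_surjective assms(2) by blast
qed

theorem proposition3p9:
  fixes q :: real
    and B1 B2 :: "complex^'n^'n"
    and i :: "complex^'m^'n"
    and j :: "complex^'n^'m"
  assumes "q > 0"
    and "B1 ** B2 - B2 ** B1 + i ** j = 0"
    and "(B1 ** adj B1 - adj B1 ** B1) + (B2 ** adj B2 - adj B2 ** B2) + i ** adj i - adj j ** j = 0"
  shows "alpha_I_injective q B1 B2 j \<and> (beta_I_surjective q B1 B2 i \<longleftrightarrow> stable B1 B2 i j)"
proof (intro conjI iffI)
  show "alpha_I_injective q B1 B2 j"
    using assms(1) by (simp add: alpha_I_is_injective)
next
  assume "beta_I_surjective q B1 B2 i"
  then show "stable B1 B2 i j"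
    by (rule stable_if_beta_I_surjective[OF assms(2)])
next
  assume "stable B1 B2 i j"
  then show "beta_I_surjective q B1 B2 i"
    by (rule beta_I_surjective_if_stable)
qed

end
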